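(* Let $\otimes$ and $\oplus$ be uninorms on $[0,1]$. If $\otimes$ satisfies property $A$ and $\oplus$ satisfies property $B'$, then $(\otimes,\oplus)$ satisfies the dual rearrangement inequality.
   Context: A uninorm is a function $\otimes:[0,1]^2\to[0,1]$ that is commutative, associative, monotonic ($x\leq y$ implies $x\otimes z\leq y\otimes z$), and has an identity element $e\in[0,1]$. A function $f$ satisfies property $A$ if for all $0\leq x\leq y\leq z\leq w\leq 1$, $w+x\leq y+z$ implies $f(x,w)\leq f(y,z)$; property $B'$ if for all $0\leq x\leq y\leq1$ and $0\leq z\leq w\leq1$, $f(x,w)-f(x,z)\geq f(y,w)-f(y,z)$. The pair $(\otimes,\oplus)$ satisfies the dual rearrangement inequality if for every $n\geq1$, all $0\leq x_1\leq\cdots\leq x_n\leq 1$, $0\leq y_1\leq\cdots\leq y_n\leq 1$ and every permutation $\sigma$ of $\{1,\dots,n\}$, $$(x_n\oplus y_1)\otimes\cdots\otimes(x_1\oplus y_n)\geq (x_{\sigma(1)}\oplus y_1)\otimes\cdots\otimes(x_{\sigma(n)}\oplus y_n)\geq (x_1\oplus y_1)\otimes\cdots\otimes(x_n\oplus y_n).$$ *)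

theory Defs
  imports Complex_Main "HOL-Combinatorics.Permutations"
begin

definition uninorm :: "(real \<Rightarrow> real \<Rightarrow> real) \<Rightarrow> bool" where
  "uninorm U \<longleftrightarrow>
     (\<forall>x\<in>{0..1}. \<forall>y\<in>{0..1}. U x y \<in> {0..1}) \<and>
     (\<forall>x\<in>{0..1}. \<forall>y\<in>{0..1}. U x y = U y x) \<and>
     (\<forall>x\<in>{0..1}. \<forall>y\<in>{0..1}. \<forall>z\<in>{0..1}. U (U x y) z = U x (U y z)) \<and>
     (\<forall>x\<in>{0..1}. \<forall>y\<in>{0..1}. \<forall>z\<in>{0..1}. x \<le> y \<longrightarrow> U x z \<le> U y z) \<and>
     (\<exists>e\<in>{0..1}. \<forall>x\<in>{0..1}. U e x = x)"

definition propA :: "(real \<Rightarrow> real \<Rightarrow> real) \<Rightarrow> bool" where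
  "propA f \<longleftrightarrow> (\<forall>x y z w. 0 \<le> x \<and> x \<le> y \<and> y \<le> z \<and> z \<le> w \<and> w \<le> 1 \<and> w + x \<le> y + z
      \<longrightarrow> f x w \<le> f y z)"

definition propB' :: "(real \<Rightarrow> real \<Rightarrow> real) \<Rightarrow> bool" where
  "propB' f \<longleftrightarrow> (\<forall>x y z w. 0 \<le> x \<and> x \<le> y \<and> y \<le> 1 \<and> 0 \<le> z \<and> z \<le> w \<and> w \<le> 1
      \<longrightarrow> f x w - f x z \<ge> f y w - f y z)"

fun ufold :: "(real \<Rightarrow> real \<Rightarrow> real) \<Rightarrow> real list \<Rightarrow> real" where
  "ufold U [] = undefined"
| "ufold U (a # as) = foldl U a as"

definition rprod :: "(real \<Rightarrow> real \<Rightarrow> real) \<Rightarrow> (real \<Rightarrow> real \<Rightarrow> real) \<Rightarrow> nat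
    \<Rightarrow> (nat \<Rightarrow> real) \<Rightarrow> (nat \<Rightarrow> real) \<Rightarrow> (nat \<Rightarrow> nat) \<Rightarrow> real" where
  "rprod T S n x y s = ufold T (map (\<lambda>i. S (x (s i)) (y i)) [1..<n+1])"

definition dual_rearrangement ::
  "(real \<Rightarrow> real \<Rightarrow> real) \<Rightarrow> (real \<Rightarrow> real \<Rightarrow> real) \<Rightarrow> bool" where
  "dual_rearrangement T S \<longleftrightarrow>
    (\<forall>n::nat. \<forall>x y :: nat \<Rightarrow> real. \<forall>\<sigma>.
       n \<ge> 1 \<and>
       (\<forall>i\<in>{1..n}. 0 \<le> x i \<and> x i \<le> 1 \<and> 0 \<le> y i \<and> y i \<le> 1) \<and>
       (\<forall>i j. 1 \<le> i \<and> i \<le> j \<and> j \<le> n \<longrightarrow> x i \<le> x j \<and> y i \<le> y j) \<and>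
       \<sigma> permutes {1..n}
       \<longrightarrow> rprod T S n x y (\<lambda>i. n + 1 - i) \<ge> rprod T S n x y \<sigma> \<and>
           rprod T S n x y \<sigma> \<ge> rprod T S n x y id)"

end

theory Submission
  imports Defs
begin

text \<open>For \<open>a \<le> b\<close> and \<open>c \<le> d\<close>, property B' of \<open>\<oplus>\<close> gives
  \<open>(b \<oplus> d) + (a \<oplus> c) \<le> (b \<oplus> c) + (a \<oplus> d)\<close>, and monotonicity places \<open>a \<oplus> c\<close> below and
  \<open>b \<oplus> d\<close> above the other two values, so property A of \<open>\<otimes>\<close> yields the exchange inequality
  \<open>(a \<oplus> c) \<otimes> (b \<oplus> d) \<le> (b \<oplus> c) \<otimes> (a \<oplus> d)\<close>. Since \<open>\<otimes>\<close> is commutative and associative,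
  the product over a permutation \<open>\<sigma>\<close> is a product over a multiset, and the exchange inequality says that
  composing \<open>\<sigma>\<close> with a transposition that creates an inversion does not decrease it. Repeating such
  transpositions strictly decreases \<open>\<Sum>k. k * \<sigma> k\<close> and ends at the reversal; running the argument
  backwards from \<open>\<sigma>\<close> ends at the identity.\<close>

lemma sum_mult_transpose_less:
  fixes g :: "nat \<Rightarrow> nat"
  assumes "finite A" and "i \<in> A" and "j \<in> A" and "i < j" and "g i < g j"
  shows "(\<Sum>k\<in>A. k * g (transpose i j k)) < (\<Sum>k\<in>A. k * g k)"
proof -
  have split: "(\<Sum>k\<in>A. h k) = h i + h j + (\<Sum>k\<in>A - {i} - {j}. h k)" for h :: "nat \<Rightarrow> nat"
    using assms sum.remove[of A i h] sum.remove[of "A - {i}" j h] by auto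
  have rest: "(\<Sum>k\<in>A - {i} - {j}. k * g (transpose i j k)) = (\<Sum>k\<in>A - {i} - {j}. k * g k)"
    by (rule sum.cong) (auto simp: transpose_apply_other)
  obtain a b where "j = i + a" "a > 0" "g j = g i + b" "b > 0"
    using assms(4,5) by (metis less_imp_add_positive)
  then have "i * g j + j * g i < i * g i + j * g j"
    by (simp add: algebra_simps)
  then show ?thesis
    unfolding split[of "\<lambda>k. k * g (transpose i j k)"] split[of "\<lambda>k. k * g k"] rest
    using assms(4) by simp
qed

lemma strict_mono_on_onto_fixes:
  fixes f :: "'a::linorder \<Rightarrow> 'a"
  assumes "finite A" and mono: "strict_mono_on A f" and onto: "f ` A = A" and "a \<in> A"
  shows "f a = a"
proof -
  let ?xs = "sorted_list_of_set A"
  have "sorted_wrt (<) (map f ?xs)"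
    unfolding sorted_wrt_map
    by (rule sorted_wrt_mono_rel[OF _ strict_sorted_list_of_set])
      (use assms(1) in \<open>auto intro: strict_mono_onD[OF mono]\<close>)
  then have "map f ?xs = ?xs"
    using assms(1) onto by (intro sorted_distinct_set_unique) (auto simp: strict_sorted_iff)
  then show ?thesis
    using assms(1,4) map_eq_conv[of f ?xs id] by simp
qed

lemma permutes_strict_mono_on_eq_id:
  fixes \<sigma> :: "'a::linorder \<Rightarrow> 'a"
  assumes "\<sigma> permutes A" and "finite A" and "strict_mono_on A \<sigma>"
  shows "\<sigma> = id"
proof
  fix a
  show "\<sigma> a = id a"
    using assms strict_mono_on_onto_fixes[OF assms(2,3) permutes_image[OF assms(1)]]
    by (cases "a \<in> A") (auto simp: permutes_not_in)
qed

lemma permutes_strict_antimono_eq_reverse: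
  fixes n :: nat
  assumes \<sigma>: "\<sigma> permutes {1..n}"
    and anti: "\<And>i j. i \<in> {1..n} \<Longrightarrow> j \<in> {1..n} \<Longrightarrow> i < j \<Longrightarrow> \<sigma> j < \<sigma> i"
    and k: "k \<in> {1..n}"
  shows "\<sigma> k = n + 1 - k"
proof -
  let ?r = "\<lambda>m. n + 1 - m"
  have "?r ` {1..n} = {1..n}"
  proof (intro equalityI subsetI)
    fix m :: nat
    assume "m \<in> {1..n}"
    then show "m \<in> ?r ` {1..n}"
      by (intro image_eqI[of _ _ "n + 1 - m"]) auto
  qed auto
  then have onto: "(?r \<circ> \<sigma>) ` {1..n} = {1..n}"
    by (simp only: image_comp[symmetric] permutes_image[OF \<sigma>])
  have "strict_mono_on {1..n} (?r \<circ> \<sigma>)"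
  proof (rule strict_mono_onI)
    fix r s
    assume "r \<in> {1..n}" "s \<in> {1..n}" "r < s"
    then have "\<sigma> s < \<sigma> r" "\<sigma> r \<le> n"
      using anti[of r s] permutes_in_image[OF \<sigma>, of r] by auto
    then show "(?r \<circ> \<sigma>) r < (?r \<circ> \<sigma>) s" by simp
  qed
  then have "?r (\<sigma> k) = k"
    using strict_mono_on_onto_fixes[OF _ _ onto k] by simp
  moreover have "\<sigma> k \<le> n"
    using permutes_in_image[OF \<sigma>, of k] k by simp
  ultimately show ?thesis by simp
qed

lemma le_at_reverse_if_inversions_increase:
  fixes f :: "(nat \<Rightarrow> nat) \<Rightarrow> 'a::order"
  assumes step: "\<And>\<sigma> i j. \<sigma> permutes {1..n} \<Longrightarrow> i \<in> {1..n} \<Longrightarrow> j \<in> {1..n} \<Longrightarrow> i < j \<Longrightarrow> \<sigma> i < \<sigma> j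
      \<Longrightarrow> f \<sigma> \<le> f (\<sigma> \<circ> transpose i j)"
    and cong: "\<And>\<sigma> \<tau>. (\<And>k. k \<in> {1..n} \<Longrightarrow> \<sigma> k = \<tau> k) \<Longrightarrow> f \<sigma> = f \<tau>"
    and "\<sigma> permutes {1..n}"
  shows "f \<sigma> \<le> f (\<lambda>k. n + 1 - k)"
  using assms(3)
proof (induction \<sigma> rule: measure_induct_rule[where f = "\<lambda>\<sigma>. \<Sum>k\<in>{1..n}. k * \<sigma> k"])
  case (less \<sigma>)
  show ?case
  proof (cases "\<exists>i\<in>{1..n}. \<exists>j\<in>{1..n}. i < j \<and> \<sigma> i < \<sigma> j")
    case True
    then obtain i j where i: "i \<in> {1..n}" and j: "j \<in> {1..n}" and "i < j" "\<sigma> i < \<sigma> j"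
      by blast
    have \<tau>: "\<sigma> \<circ> transpose i j permutes {1..n}"
      by (rule permutes_compose[OF permutes_swap_id[OF i j] less.prems])
    have "(\<Sum>k\<in>{1..n}. k * (\<sigma> \<circ> transpose i j) k) < (\<Sum>k\<in>{1..n}. k * \<sigma> k)"
      using sum_mult_transpose_less[of "{1..n}" i j \<sigma>] i j \<open>i < j\<close> \<open>\<sigma> i < \<sigma> j\<close> by simp
    then have "f (\<sigma> \<circ> transpose i j) \<le> f (\<lambda>k. n + 1 - k)"
      using less.IH \<tau> by blast
    with step[OF less.prems i j \<open>i < j\<close> \<open>\<sigma> i < \<sigma> j\<close>] show ?thesis
      by (rule order_trans)
  next
    case False
    have "\<sigma> j < \<sigma> i" if "i \<in> {1..n}" "j \<in> {1..n}" "i < j" for i j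
    proof -
      have "\<sigma> i \<noteq> \<sigma> j"
        using permutes_inj[OF less.prems] \<open>i < j\<close> by (auto dest: injD)
      moreover have "\<not> \<sigma> i < \<sigma> j"
        using False that by blast
      ultimately show ?thesis by simp
    qed
    then have "\<sigma> k = n + 1 - k" if "k \<in> {1..n}" for k
      using permutes_strict_antimono_eq_reverse[OF less.prems _ that] by blast
    then show ?thesis
      using cong by (metis order_refl)
  qed
qed

lemma id_le_if_inversions_increase:
  fixes f :: "(nat \<Rightarrow> nat) \<Rightarrow> 'a::order"
  assumes step: "\<And>\<sigma> i j. \<sigma> permutes {1..n} \<Longrightarrow> i \<in> {1..n} \<Longrightarrow> j \<in> {1..n} \<Longrightarrow> i < j \<Longrightarrow> \<sigma> i < \<sigma> j
      \<Longrightarrow> f \<sigma> \<le> f (\<sigma> \<circ> transpose i j)"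
    and "\<sigma> permutes {1..n}"
  shows "f id \<le> f \<sigma>"
  using assms(2)
proof (induction \<sigma> rule: measure_induct_rule[where f = "\<lambda>\<sigma>. \<Sum>k\<in>{1..n}. k * (n - \<sigma> k)"])
  case (less \<sigma>)
  show ?case
  proof (cases "\<exists>i\<in>{1..n}. \<exists>j\<in>{1..n}. i < j \<and> \<sigma> j < \<sigma> i")
    case True
    then obtain i j where i: "i \<in> {1..n}" and j: "j \<in> {1..n}" and "i < j" "\<sigma> j < \<sigma> i"
      by blast
    define \<tau> where "\<tau> = \<sigma> \<circ> transpose i j"
    have \<tau>: "\<tau> permutes {1..n}"
      unfolding \<tau>_def by (rule permutes_compose[OF permutes_swap_id[OF i j] less.prems])
    have "n - \<sigma> i < n - \<sigma> j"
      using permutes_in_image[OF less.prems, of i] i \<open>\<sigma> j < \<sigma> i\<close> by simp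
    then have "(\<Sum>k\<in>{1..n}. k * (n - \<tau> k)) < (\<Sum>k\<in>{1..n}. k * (n - \<sigma> k))"
      using sum_mult_transpose_less[of "{1..n}" i j "\<lambda>k. n - \<sigma> k"] i j \<open>i < j\<close>
      by (simp add: \<tau>_def)
    then have "f id \<le> f \<tau>"
      using less.IH \<tau> by blast
    also have "f \<tau> \<le> f (\<tau> \<circ> transpose i j)"
      using step[OF \<tau> i j \<open>i < j\<close>] \<open>\<sigma> j < \<sigma> i\<close> by (simp add: \<tau>_def)
    also have "\<tau> \<circ> transpose i j = \<sigma>"
      by (simp add: \<tau>_def comp_assoc)
    finally show ?thesis .
  next
    case False
    have "strict_mono_on {1..n} \<sigma>"
    proof (rule strict_mono_onI)
      fix i j
      assume "i \<in> {1..n}" "j \<in> {1..n}" "i < j"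
      moreover have "\<sigma> i \<noteq> \<sigma> j"
        using permutes_inj[OF less.prems] \<open>i < j\<close> by (auto dest: injD)
      moreover have "\<not> \<sigma> j < \<sigma> i"
        using False calculation by blast
      ultimately show "\<sigma> i < \<sigma> j" by simp
    qed
    then show ?thesis
      using permutes_strict_mono_on_eq_id[OF less.prems] by simp
  qed
qed

lemma foldl_eq_fold_mset:
  assumes "comp_fun_commute F" and "\<And>a b. F a b = F b a"
  shows "foldl F a xs = fold_mset F a (mset xs)"
proof (induction xs arbitrary: a)
  case (Cons b xs)
  interpret comp_fun_commute F by (fact assms(1))
  show ?case
    using Cons by (simp add: fold_mset_fun_left_comm assms(2))
qed simp

lemma fold_mset_image_le_exchange:
  assumes "comp_fun_commute F" and assoc: "\<And>a b c. F (F a b) c = F a (F b c)"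
    and mono: "\<And>a b c. a \<le> b \<Longrightarrow> F a c \<le> F b c"
    and "finite A" and "i \<in> A" and "j \<in> A" and "i \<noteq> j"
    and agree: "\<And>k. k \<in> A - {i, j} \<Longrightarrow> f k = g k"
    and le: "F (f i) (f j) \<le> F (g i) (g j)"
  shows "fold_mset F e (image_mset f (mset_set A)) \<le> fold_mset F e (image_mset g (mset_set A))"
proof -
  interpret comp_fun_commute F by (fact assms(1))
  let ?R = "A - {i} - {j}"
  have "mset_set A = add_mset i (mset_set (A - {i}))"
    using assms(4,5) by (rule mset_set.remove)
  also have "mset_set (A - {i}) = add_mset j (mset_set ?R)"
    using assms(4-7) by (intro mset_set.remove) auto
  finally have A: "mset_set A = add_mset i (add_mset j (mset_set ?R))" .
  have rest: "image_mset f (mset_set ?R) = image_mset g (mset_set ?R)"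
  proof (rule image_mset_cong)
    fix k
    assume "k \<in># mset_set ?R"
    then have "k \<in> A - {i, j}"
      using assms(4) by simp
    then show "f k = g k"
      by (rule agree)
  qed
  have fold: "fold_mset F e (image_mset h (mset_set A))
      = F (F (h i) (h j)) (fold_mset F e (image_mset h (mset_set ?R)))" for h
    unfolding A by (simp only: image_mset_add_mset fold_mset_add_mset assoc)
  show ?thesis
    unfolding fold[of f] fold[of g] rest by (rule mono[OF le])
qed

lemma uninorm_closed: "uninorm T \<Longrightarrow> u \<in> {0..1} \<Longrightarrow> v \<in> {0..1} \<Longrightarrow> T u v \<in> {0..1}"
  unfolding uninorm_def by blast

lemma uninorm_commute: "uninorm T \<Longrightarrow> u \<in> {0..1} \<Longrightarrow> v \<in> {0..1} \<Longrightarrow> T u v = T v u"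
  unfolding uninorm_def by blast

lemma uninorm_assoc:
  "uninorm T \<Longrightarrow> u \<in> {0..1} \<Longrightarrow> v \<in> {0..1} \<Longrightarrow> w \<in> {0..1} \<Longrightarrow> T (T u v) w = T u (T v w)"
  unfolding uninorm_def by blast

lemma uninorm_mono_left:
  "uninorm T \<Longrightarrow> u \<in> {0..1} \<Longrightarrow> v \<in> {0..1} \<Longrightarrow> w \<in> {0..1} \<Longrightarrow> u \<le> v \<Longrightarrow> T u w \<le> T v w"
  unfolding uninorm_def by blast

lemma uninorm_mono_right:
  "uninorm T \<Longrightarrow> u \<in> {0..1} \<Longrightarrow> v \<in> {0..1} \<Longrightarrow> w \<in> {0..1} \<Longrightarrow> u \<le> v \<Longrightarrow> T w u \<le> T w v"
  using uninorm_mono_left uninorm_commute by metis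

lemma uninorm_neutral:
  assumes "uninorm T"
  obtains e where "e \<in> {0..1}" and "\<And>u. u \<in> {0..1} \<Longrightarrow> T e u = u"
  using assms unfolding uninorm_def by blast

lemma uninorm_exchange:
  assumes T: "uninorm T" and S: "uninorm S" and A: "propA T" and B: "propB' S"
    and a: "a \<in> {0..1}" and b: "b \<in> {0..1}" and c: "c \<in> {0..1}" and d: "d \<in> {0..1}"
    and "a \<le> b" and "c \<le> d"
  shows "T (S a c) (S b d) \<le> T (S b c) (S a d)"
proof -
  have in01: "S a c \<in> {0..1}" "S b d \<in> {0..1}" "S b c \<in> {0..1}" "S a d \<in> {0..1}"
    using uninorm_closed[OF S] a b c d by auto
  have mono: "S a c \<le> S b c" "S b c \<le> S b d" "S a c \<le> S a d" "S a d \<le> S b d"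
    using uninorm_mono_left[OF S] uninorm_mono_right[OF S] a b c d \<open>a \<le> b\<close> \<open>c \<le> d\<close> by auto
  have sum: "S b d + S a c \<le> S b c + S a d"
    using B a b c d \<open>a \<le> b\<close> \<open>c \<le> d\<close> unfolding propB'_def by force
  show ?thesis
  proof (cases "S b c \<le> S a d")
    case True
    with A in01 mono sum show ?thesis unfolding propA_def by auto
  next
    case False
    with A in01 mono sum have "T (S a c) (S b d) \<le> T (S a d) (S b c)"
      unfolding propA_def by auto
    with uninorm_commute[OF T] in01 show ?thesis by metis
  qed
qed

text \<open>Clamping the arguments extends a uninorm to a commutative, associative and monotone
  operation on all of \<^typ>\<open>real\<close>, to which the multiset folds above apply.\<close>

definition clamp01 :: "real \<Rightarrow> real" where
  "clamp01 u = max 0 (min 1 u)"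

definition uninorm_ext :: "(real \<Rightarrow> real \<Rightarrow> real) \<Rightarrow> real \<Rightarrow> real \<Rightarrow> real" where
  "uninorm_ext T u v = T (clamp01 u) (clamp01 v)"

lemma clamp01_in: "clamp01 u \<in> {0..1}"
  by (simp add: clamp01_def)

lemma clamp01_eq: "u \<in> {0..1} \<Longrightarrow> clamp01 u = u"
  by (simp add: clamp01_def)

lemma clamp01_mono: "u \<le> v \<Longrightarrow> clamp01 u \<le> clamp01 v"
  by (simp add: clamp01_def)

lemma uninorm_ext_eq: "u \<in> {0..1} \<Longrightarrow> v \<in> {0..1} \<Longrightarrow> uninorm_ext T u v = T u v"
  by (simp add: uninorm_ext_def clamp01_eq)

lemma uninorm_ext_commute: "uninorm T \<Longrightarrow> uninorm_ext T u v = uninorm_ext T v u"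
  unfolding uninorm_ext_def by (rule uninorm_commute[OF _ clamp01_in clamp01_in])

lemma uninorm_ext_assoc:
  assumes "uninorm T"
  shows "uninorm_ext T (uninorm_ext T u v) w = uninorm_ext T u (uninorm_ext T v w)"
  unfolding uninorm_ext_def
  by (simp only: clamp01_eq[OF uninorm_closed[OF assms clamp01_in clamp01_in]])
    (rule uninorm_assoc[OF assms clamp01_in clamp01_in clamp01_in])

lemma uninorm_ext_mono: "uninorm T \<Longrightarrow> u \<le> v \<Longrightarrow> uninorm_ext T u w \<le> uninorm_ext T v w"
  unfolding uninorm_ext_def by (rule uninorm_mono_left[OF _ clamp01_in clamp01_in clamp01_in clamp01_mono])

lemma comp_fun_commute_uninorm_ext: "uninorm T \<Longrightarrow> comp_fun_commute (uninorm_ext T)"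
  by unfold_locales (simp add: fun_eq_iff, metis uninorm_ext_assoc uninorm_ext_commute)

lemma foldl_uninorm_ext:
  assumes "uninorm T" and "a \<in> {0..1}" and "set xs \<subseteq> {0..1}"
  shows "foldl (uninorm_ext T) a xs = foldl T a xs"
  using assms(2,3)
proof (induction xs arbitrary: a)
  case (Cons b xs)
  then have "T a b \<in> {0..1}" using uninorm_closed[OF assms(1)] by simp
  with Cons show ?case by (simp add: uninorm_ext_eq)
qed simp

lemma ufold_eq_fold_mset:
  assumes T: "uninorm T" and e: "e \<in> {0..1}" "\<And>u. u \<in> {0..1} \<Longrightarrow> T e u = u"
    and "xs \<noteq> []" and xs: "set xs \<subseteq> {0..1}"
  shows "ufold T xs = fold_mset (uninorm_ext T) e (mset xs)"
proof -
  obtain a as where a: "xs = a # as"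
    using \<open>xs \<noteq> []\<close> by (cases xs) auto
  have "ufold T xs = foldl (uninorm_ext T) a as"
    using a xs by (simp add: foldl_uninorm_ext[OF T])
  also have "\<dots> = foldl (uninorm_ext T) e xs"
    using a xs e by (simp add: uninorm_ext_eq)
  also have "\<dots> = fold_mset (uninorm_ext T) e (mset xs)"
    by (rule foldl_eq_fold_mset[OF comp_fun_commute_uninorm_ext[OF T] uninorm_ext_commute[OF T]])
  finally show ?thesis .
qed

lemma rprod_eq_fold_mset:
  assumes T: "uninorm T" and e: "e \<in> {0..1}" "\<And>u. u \<in> {0..1} \<Longrightarrow> T e u = u"
    and "n \<ge> 1" and "\<And>i. i \<in> {1..n} \<Longrightarrow> S (x (s i)) (y i) \<in> {0..1}"
  shows "rprod T S n x y s
    = fold_mset (uninorm_ext T) e (image_mset (\<lambda>i. S (x (s i)) (y i)) (mset_set {1..n}))"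
proof -
  let ?f = "\<lambda>i. S (x (s i)) (y i)"
  have "{1..<n+1} = {1..n}" by auto
  then have "mset (map ?f [1..<n+1]) = image_mset ?f (mset_set {1..n})"
    by (simp only: mset_map mset_upt)
  moreover have "ufold T (map ?f [1..<n+1]) = fold_mset (uninorm_ext T) e (mset (map ?f [1..<n+1]))"
    using assms by (intro ufold_eq_fold_mset[OF T e]) auto
  ultimately show ?thesis
    unfolding rprod_def by simp
qed

lemma rprod_cong:
  "(\<And>k. k \<in> {1..n} \<Longrightarrow> s k = t k) \<Longrightarrow> rprod T S n x y s = rprod T S n x y t"
  unfolding rprod_def by (intro arg_cong[where f = "ufold T"] map_cong) auto

lemma rprod_transpose_le:
  assumes T: "uninorm T" and S: "uninorm S" and A: "propA T" and B: "propB' S"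
    and x: "x ` {1..n} \<subseteq> {0..1}" "mono_on {1..n} x"
    and y: "y ` {1..n} \<subseteq> {0..1}" "mono_on {1..n} y"
    and \<sigma>: "\<sigma> permutes {1..n}" and i: "i \<in> {1..n}" and j: "j \<in> {1..n}"
    and "i < j" and "\<sigma> i < \<sigma> j"
  shows "rprod T S n x y \<sigma> \<le> rprod T S n x y (\<sigma> \<circ> transpose i j)"
proof -
  obtain e where e: "e \<in> {0..1}" "\<And>u. u \<in> {0..1} \<Longrightarrow> T e u = u"
    using uninorm_neutral[OF T] by blast
  have "n \<ge> 1" using i by simp
  have \<tau>: "\<sigma> \<circ> transpose i j permutes {1..n}"
    by (rule permutes_compose[OF permutes_swap_id[OF i j] \<sigma>])
  have in01: "S (x (\<rho> k)) (y k) \<in> {0..1}" if "\<rho> permutes {1..n}" "k \<in> {1..n}" for \<rho> k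
    using uninorm_closed[OF S] permutes_in_image[OF that(1)] that(2) x(1) y(1) by blast
  have \<sigma>ij: "\<sigma> i \<in> {1..n}" "\<sigma> j \<in> {1..n}"
    using permutes_in_image[OF \<sigma>] i j by auto
  have fold: "rprod T S n x y \<rho>
      = fold_mset (uninorm_ext T) e (image_mset (\<lambda>k. S (x (\<rho> k)) (y k)) (mset_set {1..n}))"
    if "\<rho> permutes {1..n}" for \<rho>
    using e \<open>n \<ge> 1\<close> in01[OF that] by (intro rprod_eq_fold_mset[OF T])
  have xi: "x (\<sigma> i) \<in> {0..1}" and xj: "x (\<sigma> j) \<in> {0..1}" and yi: "y i \<in> {0..1}" and yj: "y j \<in> {0..1}"
    using \<sigma>ij i j x(1) y(1) by blast+
  have "x (\<sigma> i) \<le> x (\<sigma> j)"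
    using \<sigma>ij \<open>\<sigma> i < \<sigma> j\<close> by (intro mono_onD[OF x(2)]) auto
  moreover have "y i \<le> y j"
    using i j \<open>i < j\<close> by (auto intro: mono_onD[OF y(2)])
  ultimately have "T (S (x (\<sigma> i)) (y i)) (S (x (\<sigma> j)) (y j)) \<le> T (S (x (\<sigma> j)) (y i)) (S (x (\<sigma> i)) (y j))"
    by (rule uninorm_exchange[OF T S A B xi xj yi yj])
  then have "uninorm_ext T (S (x (\<sigma> i)) (y i)) (S (x (\<sigma> j)) (y j))
      \<le> uninorm_ext T (S (x (\<sigma> j)) (y i)) (S (x (\<sigma> i)) (y j))"
    using uninorm_closed[OF S] xi xj yi yj by (simp add: uninorm_ext_eq)
  then show ?thesis
    unfolding fold[OF \<sigma>] fold[OF \<tau>]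
    using i j \<open>i < j\<close>
    by (intro fold_mset_image_le_exchange[where i = i and j = j, OF comp_fun_commute_uninorm_ext[OF T]
          uninorm_ext_assoc[OF T] uninorm_ext_mono[OF T]]) (auto simp: transpose_apply_other)
qed

theorem theorem7:
  fixes T S :: "real \<Rightarrow> real \<Rightarrow> real"
  assumes "uninorm T" and "uninorm S"
    and "propA T" and "propB' S"
  shows "dual_rearrangement T S"
  unfolding dual_rearrangement_def
proof (intro allI impI, elim conjE)
  fix n :: nat and x y :: "nat \<Rightarrow> real" and \<sigma>
  assume "1 \<le> n"
    and range: "\<forall>i\<in>{1..n}. 0 \<le> x i \<and> x i \<le> 1 \<and> 0 \<le> y i \<and> y i \<le> 1"
    and mono: "\<forall>i j. 1 \<le> i \<and> i \<le> j \<and> j \<le> n \<longrightarrow> x i \<le> x j \<and> y i \<le> y j"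
    and \<sigma>: "\<sigma> permutes {1..n}"
  have "x ` {1..n} \<subseteq> {0..1}" "y ` {1..n} \<subseteq> {0..1}"
    using range by auto
  moreover have "mono_on {1..n} x" "mono_on {1..n} y"
    using mono by (auto intro: mono_onI)
  ultimately have step: "\<And>\<tau> i j. \<tau> permutes {1..n} \<Longrightarrow> i \<in> {1..n} \<Longrightarrow> j \<in> {1..n} \<Longrightarrow> i < j
      \<Longrightarrow> \<tau> i < \<tau> j \<Longrightarrow> rprod T S n x y \<tau> \<le> rprod T S n x y (\<tau> \<circ> transpose i j)"
    using rprod_transpose_le[OF assms] by blast
  show "rprod T S n x y \<sigma> \<le> rprod T S n x y (\<lambda>i. n + 1 - i) \<and> rprod T S n x y id \<le> rprod T S n x y \<sigma>"
    using le_at_reverse_if_inversions_increase[OF step rprod_cong \<sigma>]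
      id_le_if_inversions_increase[OF step \<sigma>] by blast
qed

end
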